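(* Let $k$ be a field of characteristic $0$, $n\geq3$, let $\phi'$ be a regular quadratic form over $k$ in $n-2$ variables, $\phi=\langle1\rangle\perp(-\phi')$, and let $X\subset\mathbb A^n_k$ be the zero locus of $x_1x_2-\phi(1,x_3,\dots,x_n)$ (a model of $Q^\psi$ for $\psi=\langle1,-1\rangle\perp\phi'$). Suppose $\phi$ is anisotropic and let $f:\mathbb A^1_k\dashrightarrow X$ be a rational map, viewed also as an element of $X(k(t))$. Then the following are equivalent: (1) $f^*(x_1)\in c\,\langle D(\phi_{k(t)})\rangle$ for some $c\in k^*$; (2) for any $t_1\in k$ at which $f$ is defined, $[f]_1=[f(t_1)]_1$ in $\mathcal S(X)(k(t))$, i.e. the map ${\rm Spec}\,k(t)\xrightarrow{f}X$ is $\mathbb A^1$-chain homotopic to the constant map ${\rm Spec}\,k(t)\to X$ at the $k$-point $f(t_1)$. Moreover, if $\phi$ is isotropic, then (2) holds for every rational map $f:\mathbb A^1_k\dashrightarrow X$.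
   Context: $k(t)$ is the function field of $\mathbb A^1_k$; $D(\phi_{k(t)})$ is the set of nonzero values in $k(t)$ represented by $\phi$ and $\langle D(\phi_{k(t)})\rangle$ the subgroup of $k(t)^*$ it generates. $Sm/k$ denotes smooth finite-type $k$-schemes with the Nisnevich topology; for a sheaf $\mathcal F$ and finitely generated separable $K/k$, $\mathcal F(K)$ is the colimit of $\mathcal F(U)$ over smooth $k$-schemes $U$ with function field $K$. Sections are $\mathbb A^1$-homotopic if some $h\in\mathcal F(\mathbb A^1_k\times U)$ has $h(0)=x_0,h(1)=x_1$; $\mathbb A^1$-chain homotopy is the generated equivalence relation; $\mathcal S(\mathcal F)$ is the Nisnevich sheafification of $U\mapsto\mathcal F(U)/(\mathbb A^1\text{-chain homotopy})$; $[x]_1$ denotes the image of $x$ in $\mathcal S(\mathcal F)$. *)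

theory Defs
  imports "HOL-Computational_Algebra.Computational_Algebra"
begin

text \<open>The quadratic form phi' in m = n-2 variables over k is given by a symmetric
  coefficient matrix a (indices < m): phi'(y) = sum_{i,j<m} a i j * y i * y j.
  The generic embedding emb maps coefficients from k into the ring R over which we evaluate.\<close>

definition qf_eval :: "('k \<Rightarrow> 'R::comm_ring_1) \<Rightarrow> (nat \<Rightarrow> nat \<Rightarrow> 'k) \<Rightarrow> nat \<Rightarrow> (nat \<Rightarrow> 'R) \<Rightarrow> 'R" where
  "qf_eval emb a m y = (\<Sum>i<m. \<Sum>j<m. emb (a i j) * y i * y j)"

definition symmetric_qf :: "(nat \<Rightarrow> nat \<Rightarrow> 'k) \<Rightarrow> nat \<Rightarrow> bool" where
  "symmetric_qf a m \<longleftrightarrow> (\<forall>i<m. \<forall>j<m. a i j = a j i)"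

definition regular_qf :: "(nat \<Rightarrow> nat \<Rightarrow> 'k::field) \<Rightarrow> nat \<Rightarrow> bool" where
  "regular_qf a m \<longleftrightarrow>
     (\<forall>v. (\<forall>w. (\<Sum>i<m. \<Sum>j<m. a i j * v i * w j) = 0) \<longrightarrow> (\<forall>i<m. v i = 0))"

text \<open>phi = <1> \<perp> (-phi') in m+1 variables: phi(v) = v 0 ^2 - phi'(v 1, ..., v m).\<close>
definition phi_eval :: "('k \<Rightarrow> 'R::comm_ring_1) \<Rightarrow> (nat \<Rightarrow> nat \<Rightarrow> 'k) \<Rightarrow> nat \<Rightarrow> (nat \<Rightarrow> 'R) \<Rightarrow> 'R" where
  "phi_eval emb a m v = v 0 * v 0 - qf_eval emb a m (\<lambda>i. v (Suc i))"

definition anisotropic_phi :: "(nat \<Rightarrow> nat \<Rightarrow> 'k::field) \<Rightarrow> nat \<Rightarrow> bool" where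
  "anisotropic_phi a m \<longleftrightarrow> (\<forall>v. phi_eval id a m v = 0 \<longrightarrow> (\<forall>i\<le>m. v i = 0))"

definition D_phi :: "('k \<Rightarrow> 'K::field) \<Rightarrow> (nat \<Rightarrow> nat \<Rightarrow> 'k) \<Rightarrow> nat \<Rightarrow> 'K set" where
  "D_phi emb a m = {c. c \<noteq> 0 \<and> (\<exists>v. c = phi_eval emb a m v)}"

inductive_set gen_subgroup :: "'K::field set \<Rightarrow> 'K set" for S where
  one: "1 \<in> gen_subgroup S"
| mult: "x \<in> gen_subgroup S \<Longrightarrow> d \<in> S \<Longrightarrow> x * d \<in> gen_subgroup S"
| mult_inv: "x \<in> gen_subgroup S \<Longrightarrow> d \<in> S \<Longrightarrow> x * inverse d \<in> gen_subgroup S"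

text \<open>R-points of X = {x1 x2 = phi(1,x3,...,xn)} \<subseteq> A^n, n = m+2.
  Coordinates: x 0 = x_1, x 1 = x_2, x (i+2) = x_(i+3); coordinates \<ge> m+2 are 0.\<close>
definition in_X :: "('k \<Rightarrow> 'R::comm_ring_1) \<Rightarrow> (nat \<Rightarrow> nat \<Rightarrow> 'k) \<Rightarrow> nat \<Rightarrow> (nat \<Rightarrow> 'R) \<Rightarrow> bool" where
  "in_X emb a m x \<longleftrightarrow>
     x 0 * x 1 = phi_eval emb a m (\<lambda>i. if i = 0 then 1 else x (Suc i)) \<and>
     (\<forall>i\<ge>m+2. x i = 0)"

definition emb_kt :: "'k::field \<Rightarrow> 'k poly fract" where
  "emb_kt c = Fract [:c:] 1"

definition emb_kts :: "'k::field \<Rightarrow> 'k poly fract poly" where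
  "emb_kts c = [:emb_kt c:]"

definition A1_homotopic :: "(nat \<Rightarrow> nat \<Rightarrow> 'k::field) \<Rightarrow> nat \<Rightarrow>
    (nat \<Rightarrow> 'k poly fract) \<Rightarrow> (nat \<Rightarrow> 'k poly fract) \<Rightarrow> bool" where
  "A1_homotopic a m x y \<longleftrightarrow>
     (\<exists>h. in_X emb_kts a m h \<and> (\<lambda>i. poly (h i) 0) = x \<and> (\<lambda>i. poly (h i) 1) = y)"

text \<open>A^1-chain homotopy: equivalence relation generated. Equality of the classes
  [x]_1 = [y]_1 in S(X)(k(t)).\<close>
definition A1_chain_homotopic :: "(nat \<Rightarrow> nat \<Rightarrow> 'k::field) \<Rightarrow> nat \<Rightarrow>
    (nat \<Rightarrow> 'k poly fract) \<Rightarrow> (nat \<Rightarrow> 'k poly fract) \<Rightarrow> bool" where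
  "A1_chain_homotopic a m = (\<lambda>x y. A1_homotopic a m x y \<or> A1_homotopic a m y x)\<^sup>*\<^sup>*"

definition rat_value_at :: "'k::field poly fract \<Rightarrow> 'k \<Rightarrow> 'k \<Rightarrow> bool" where
  "rat_value_at q t1 c \<longleftrightarrow>
     (\<exists>p r. poly r t1 \<noteq> 0 \<and> q = Fract p r \<and> c = poly p t1 / poly r t1)"

definition rat_map_value_at :: "(nat \<Rightarrow> 'k::field poly fract) \<Rightarrow> 'k \<Rightarrow> (nat \<Rightarrow> 'k) \<Rightarrow> bool" where
  "rat_map_value_at f t1 y \<longleftrightarrow> (\<forall>i. rat_value_at (f i) t1 (y i))"

definition cond2 :: "(nat \<Rightarrow> nat \<Rightarrow> 'k::field) \<Rightarrow> nat \<Rightarrow> (nat \<Rightarrow> 'k poly fract) \<Rightarrow> bool" where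
  "cond2 a m f \<longleftrightarrow>
     (\<forall>t1 y. rat_map_value_at f t1 y \<longrightarrow> A1_chain_homotopic a m f (\<lambda>i. emb_kt (y i)))"

end

theory Submission
  imports Defs
begin

text \<open>
  A point of \<open>X\<close> over a ring is a triple \<open>(x_1, x_2, z)\<close> with \<open>x_1 x_2 = 1 - phi'(z)\<close>.
  Over \<open>k(t)[s]\<close> there are elementary homotopies moving \<open>z\<close> along a line while \<open>x_1\<close>
  (or \<open>x_2\<close>) stays fixed, and moving \<open>x_1\<close> along a line when \<open>x_2 = 0\<close> and \<open>phi'(z) = 1\<close>.

  If \<open>phi\<close> is isotropic, the regular form \<open>phi'\<close> represents 1, and these moves join every
  point to \<open>(0, 0, w)\<close> with \<open>phi'(w) = 1\<close>, so (2) always holds.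

  If \<open>phi\<close> is anisotropic, \<open>x_1\<close> never vanishes.  For a homotopy
  \<open>x_1(s) x_2(s) = 1 - phi'(z(s))\<close>, reducing \<open>z\<close> modulo \<open>x_1\<close> lowers the degree and shows
  \<open>x_1(0) / x_1(1) \<in> <D>\<close>; thus \<open>x_1\<close> modulo \<open><D>\<close> is a chain homotopy invariant, which gives
  (2) \<open>\<Longrightarrow>\<close> (1).  Conversely, every point is homotopic to \<open>(c, 1/c, 0)\<close> with \<open>c = x_1\<close>, and
  the moves show \<open>(c, 1/c, 0) ~ (c r, 1/(c r), 0)\<close> for \<open>r = 1 - phi'(w)\<close>, for \<open>r = -phi'(w)\<close>
  and for squares, hence for all \<open>r \<in> <D>\<close>.  For (1) \<open>\<Longrightarrow>\<close> (2) it remains to see that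
  \<open>x_1 / x_1(t_1) \<in> <D>\<close>: every element of \<open>D\<close> is, up to an even power of \<open>t - t_1\<close>, a value
  of \<open>phi\<close> on polynomials not all vanishing at \<open>t_1\<close>, whose specialisation at \<open>t_1\<close> lies in \<open>D\<close>
  by anisotropy.
\<close>

section \<open>Quadratic forms over k and k(t)\<close>

definition bilin_eval :: "('k \<Rightarrow> 'R::comm_ring_1) \<Rightarrow> (nat \<Rightarrow> nat \<Rightarrow> 'k) \<Rightarrow> nat \<Rightarrow>
    (nat \<Rightarrow> 'R) \<Rightarrow> (nat \<Rightarrow> 'R) \<Rightarrow> 'R" where
  "bilin_eval e a m y u = (\<Sum>i<m. \<Sum>j<m. e (a i j) * y i * u j)"

lemma qf_eval_hom:
  fixes h :: "'R::comm_ring_1 \<Rightarrow> 'S::comm_ring_1"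
  assumes add: "\<And>x y. h (x + y) = h x + h y" and mult: "\<And>x y. h (x * y) = h x * h y"
    and emb: "\<And>c. e' c = h (e c)"
  shows "qf_eval e' a m (\<lambda>i. h (v i)) = h (qf_eval e a m v)"
proof -
  have "h 0 = 0" using add[of 0 0] by simp
  then show ?thesis
    unfolding qf_eval_def by (simp add: sum_comp_morphism[of h, OF _ add, symmetric] mult emb o_def)
qed

lemma phi_eval_hom:
  fixes h :: "'R::comm_ring_1 \<Rightarrow> 'S::comm_ring_1"
  assumes add: "\<And>x y. h (x + y) = h x + h y" and mult: "\<And>x y. h (x * y) = h x * h y"
    and emb: "\<And>c. e' c = h (e c)"
  shows "phi_eval e' a m (\<lambda>i. h (v i)) = h (phi_eval e a m v)"
proof -
  have diff: "h (x - y) = h x - h y" for x y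
    using add[of "x - y" y] by (simp add: algebra_simps)
  show ?thesis
    unfolding phi_eval_def diff mult qf_eval_hom[of h, OF add mult emb] ..
qed

lemma qf_eval_cong: "(\<And>i. i < m \<Longrightarrow> v i = w i) \<Longrightarrow> qf_eval e a m v = qf_eval e a m w"
  unfolding qf_eval_def by (intro sum.cong) auto

lemma phi_eval_cong:
  assumes "\<And>i. i \<le> m \<Longrightarrow> v i = w i"
  shows "phi_eval e a m v = phi_eval e a m w"
proof -
  have "qf_eval e a m (\<lambda>i. v (Suc i)) = qf_eval e a m (\<lambda>i. w (Suc i))"
    by (rule qf_eval_cong) (simp add: assms)
  then show ?thesis unfolding phi_eval_def using assms[of 0] by simp
qed

lemma qf_eval_zero [simp]: "qf_eval e a m (\<lambda>i. 0) = 0"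
  unfolding qf_eval_def by simp

lemma qf_eval_scale: "qf_eval e a m (\<lambda>i. c * v i) = c * c * qf_eval e a m v"
  unfolding qf_eval_def by (simp add: sum_distrib_left mult_ac)

lemma phi_eval_scale: "phi_eval e a m (\<lambda>i. c * v i) = c * c * phi_eval e a m v"
  unfolding phi_eval_def qf_eval_scale by (simp add: algebra_simps)

lemma phi_eval_one_tail: "phi_eval e a m (\<lambda>i. if i = 0 then 1 else w (i - 1)) = 1 - qf_eval e a m w"
  unfolding phi_eval_def by simp

lemma bilin_eval_commute:
  assumes "symmetric_qf a m"
  shows "bilin_eval e a m u z = bilin_eval e a m z u"
  unfolding bilin_eval_def using assms
  by (subst sum.swap) (simp add: symmetric_qf_def mult_ac)

lemma qf_eval_add_scaled:
  assumes "symmetric_qf a m"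
  shows "qf_eval e a m (\<lambda>i. y i + c * u i) =
    qf_eval e a m y + 2 * c * bilin_eval e a m y u + c * c * qf_eval e a m u"
proof -
  have "qf_eval e a m (\<lambda>i. y i + c * u i) =
      qf_eval e a m y + c * bilin_eval e a m y u + c * bilin_eval e a m u y + c * c * qf_eval e a m u"
    unfolding qf_eval_def bilin_eval_def sum_distrib_left sum.distrib[symmetric]
    by (intro sum.cong refl) (simp add: algebra_simps)
  then show ?thesis using bilin_eval_commute[OF assms, of e u y] by (simp add: algebra_simps)
qed

lemma emb_kt_conv_to_fract: "emb_kt c = to_fract [:c:]"
  unfolding emb_kt_def to_fract_def ..

lemma emb_kt_add [simp]: "emb_kt (x + y) = emb_kt x + emb_kt y"
  by (simp add: emb_kt_conv_to_fract flip: to_fract_add)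

lemma emb_kt_mult [simp]: "emb_kt (x * y) = emb_kt x * emb_kt y"
  by (simp add: emb_kt_conv_to_fract flip: to_fract_mult)

lemma emb_kt_diff [simp]: "emb_kt (x - y) = emb_kt x - emb_kt y"
  by (simp add: emb_kt_conv_to_fract flip: to_fract_diff)

lemma emb_kt_0 [simp]: "emb_kt 0 = 0"
  by (simp add: emb_kt_conv_to_fract)

lemma emb_kt_1 [simp]: "emb_kt 1 = 1"
  by (simp add: emb_kt_conv_to_fract flip: one_pCons)

lemma emb_kt_eq_0_iff [simp]: "emb_kt x = 0 \<longleftrightarrow> x = 0"
  by (simp add: emb_kt_conv_to_fract)

lemma emb_kt_inverse [simp]: "emb_kt (inverse x) = inverse (emb_kt x)"
proof (cases "x = 0")
  case False
  then have "emb_kt (inverse x) * emb_kt x = 1" by (simp flip: emb_kt_mult)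
  then show ?thesis using False by (simp add: field_simps)
qed simp

lemma emb_kt_divide [simp]: "emb_kt (x / y) = emb_kt x / emb_kt y"
  by (simp add: divide_inverse)

lemma fract_common_denominator:
  fixes v :: "nat \<Rightarrow> 'a::idom fract"
  shows "\<exists>R V. R \<noteq> 0 \<and> (\<forall>i\<le>n. to_fract R * v i = to_fract (V i))"
proof (induction n)
  case 0
  obtain p r where "v 0 = Fract p r" "r \<noteq> 0" by (cases "v 0")
  then show ?case
    by (intro exI[of _ r] exI[of _ "\<lambda>i. p"]) (simp add: Fract_conv_to_fract)
next
  case (Suc n)
  then obtain R V where RV: "R \<noteq> 0" "\<forall>i\<le>n. to_fract R * v i = to_fract (V i)" by blast
  obtain p r where pr: "v (Suc n) = Fract p r" "r \<noteq> 0" by (cases "v (Suc n)")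
  have denom: "to_fract (R * r) * v i = to_fract (if i \<le> n then V i * r else p * R)"
    if "i \<le> Suc n" for i
  proof (cases "i \<le> n")
    case True
    have "to_fract (R * r) * v i = to_fract r * (to_fract R * v i)" by (simp add: mult_ac)
    then show ?thesis using RV(2) True by (simp add: mult.commute)
  next
    case False
    then show ?thesis using pr that by (simp add: Fract_conv_to_fract le_Suc_eq)
  qed
  moreover have "R * r \<noteq> 0" using RV(1) pr(2) by simp
  ultimately show ?case
    by (intro exI[of _ "R * r"] exI[of _ "\<lambda>i. if i \<le> n then V i * r else p * R"] conjI allI impI)
      simp_all
qed

lemma anisotropic_phi_over_kt:
  fixes a :: "nat \<Rightarrow> nat \<Rightarrow> 'k::field_char_0" and v :: "nat \<Rightarrow> 'k poly fract"
  assumes an: "anisotropic_phi a m" and zero: "phi_eval emb_kt a m v = 0"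
  shows "\<forall>i\<le>m. v i = 0"
proof (intro allI impI)
  fix i assume i: "i \<le> m"
  obtain R V where RV: "R \<noteq> 0" "\<forall>i\<le>m. to_fract R * v i = to_fract (V i)"
    using fract_common_denominator by blast
  have "to_fract (phi_eval (\<lambda>c. [:c:]) a m V) = phi_eval emb_kt a m (\<lambda>i. to_fract (V i))"
    by (rule phi_eval_hom[symmetric]) (simp_all add: emb_kt_conv_to_fract)
  also have "\<dots> = phi_eval emb_kt a m (\<lambda>i. to_fract R * v i)"
    by (rule phi_eval_cong) (simp add: RV)
  also have "\<dots> = 0" by (simp add: phi_eval_scale zero)
  finally have V_zero: "phi_eval (\<lambda>c. [:c:]) a m V = 0" by simp
  have "poly (V i) x = 0" for x
  proof -
    have "phi_eval id a m (\<lambda>j. poly (V j) x) = poly (phi_eval (\<lambda>c. [:c:]) a m V) x"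
      by (rule phi_eval_hom) simp_all
    then have "phi_eval id a m (\<lambda>j. poly (V j) x) = 0" using V_zero by simp
    then show ?thesis using an i unfolding anisotropic_phi_def by blast
  qed
  then have "V i = 0" using poly_all_0_iff_0 by blast
  then have "to_fract R * v i = 0" using RV i by simp
  then show "v i = 0" using RV(1) by simp
qed

lemma one_minus_qf_in_D_phi:
  fixes a :: "nat \<Rightarrow> nat \<Rightarrow> 'k::field_char_0"
  assumes "anisotropic_phi a m"
  shows "1 - qf_eval emb_kt a m w \<in> D_phi emb_kt a m"
proof -
  let ?v = "\<lambda>i. if i = 0 then 1 else w (i - 1)"
  have "phi_eval emb_kt a m ?v \<noteq> 0"
    using anisotropic_phi_over_kt[OF assms, of ?v] by force
  moreover have "1 - qf_eval emb_kt a m w = phi_eval emb_kt a m ?v"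
    by (rule phi_eval_one_tail[symmetric])
  ultimately show ?thesis unfolding D_phi_def by auto
qed

lemma D_phi_nonzero: "0 \<notin> D_phi e a m"
  unfolding D_phi_def by simp

lemma one_minus_qf_kt_nonzero:
  fixes a :: "nat \<Rightarrow> nat \<Rightarrow> 'k::field_char_0"
  assumes "anisotropic_phi a m"
  shows "1 - qf_eval emb_kt a m w \<noteq> 0"
  using one_minus_qf_in_D_phi[OF assms] D_phi_nonzero by metis

lemma qf_kt_nonzero:
  fixes a :: "nat \<Rightarrow> nat \<Rightarrow> 'k::field_char_0"
  assumes an: "anisotropic_phi a m" and "j < m" "w j \<noteq> 0"
  shows "qf_eval emb_kt a m w \<noteq> 0"
proof
  assume "qf_eval emb_kt a m w = 0"
  then have "phi_eval emb_kt a m (\<lambda>i. if i = 0 then 0 else w (i - 1)) = 0"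
    unfolding phi_eval_def by simp
  then have "\<forall>i\<le>m. (if i = 0 then 0 else w (i - 1)) = 0"
    by (rule anisotropic_phi_over_kt[OF an])
  then show False using assms(2,3) by (auto dest: spec[of _ "Suc j"])
qed

lemma gen_subgroup_mult:
  assumes "x \<in> gen_subgroup S" "y \<in> gen_subgroup S"
  shows "x * y \<in> gen_subgroup S"
  using assms(2)
proof (induction y rule: gen_subgroup.induct)
  case one
  then show ?case using assms(1) by simp
next
  case (mult y d)
  then show ?case using gen_subgroup.mult[of "x * y" S d] by (simp add: mult.assoc)
next
  case (mult_inv y d)
  then show ?case using gen_subgroup.mult_inv[of "x * y" S d] by (simp add: mult.assoc)
qed

lemma gen_subgroup_inverse: "x \<in> gen_subgroup S \<Longrightarrow> inverse x \<in> gen_subgroup S"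
proof (induction x rule: gen_subgroup.induct)
  case (mult x d)
  then show ?case using gen_subgroup.mult_inv[of "inverse x" S d] by (simp add: mult.commute)
next
  case (mult_inv x d)
  then show ?case using gen_subgroup.mult[of "inverse x" S d] by (simp add: mult.commute)
qed (simp add: gen_subgroup.one)

lemma gen_subgroup_divide:
  "x \<in> gen_subgroup S \<Longrightarrow> y \<in> gen_subgroup S \<Longrightarrow> x / y \<in> gen_subgroup S"
  by (simp add: divide_inverse gen_subgroup_mult gen_subgroup_inverse)

lemma gen_subgroup_generator: "d \<in> S \<Longrightarrow> d \<in> gen_subgroup S"
  using gen_subgroup.mult[OF gen_subgroup.one] by fastforce

lemma gen_subgroup_nonzero:
  assumes "0 \<notin> S" "x \<in> gen_subgroup S"
  shows "x \<noteq> 0"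
  using assms(2) by (induction x rule: gen_subgroup.induct) (use assms(1) in auto)

lemma gen_subgroup_least:
  assumes "1 \<in> G" "\<And>x y. x \<in> G \<Longrightarrow> y \<in> G \<Longrightarrow> x * y \<in> G" "\<And>x. x \<in> G \<Longrightarrow> inverse x \<in> G"
    and "S \<subseteq> G"
  shows "gen_subgroup S \<subseteq> G"
proof
  fix x assume "x \<in> gen_subgroup S"
  then show "x \<in> G" by (induction x rule: gen_subgroup.induct) (use assms in blast)+
qed

section \<open>Points of X and elementary A^1-homotopies\<close>

definition X_pt :: "nat \<Rightarrow> 'a::zero \<Rightarrow> 'a \<Rightarrow> (nat \<Rightarrow> 'a) \<Rightarrow> nat \<Rightarrow> 'a" where
  "X_pt m c d z = (\<lambda>i. if i = 0 then c else if i = 1 then d else if i < m + 2 then z (i - 2) else 0)"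

lemma X_pt_0 [simp]: "X_pt m c d z 0 = c"
  and X_pt_Suc_0 [simp]: "X_pt m c d z (Suc 0) = d"
  by (simp_all add: X_pt_def)

lemma in_X_iff:
  "in_X e a m x \<longleftrightarrow> x 0 * x 1 = 1 - qf_eval e a m (\<lambda>j. x (Suc (Suc j))) \<and> (\<forall>i\<ge>m + 2. x i = 0)"
  unfolding in_X_def phi_eval_def by simp

lemma in_X_X_pt_iff: "in_X e a m (X_pt m c d z) \<longleftrightarrow> c * d = 1 - qf_eval e a m z"
proof -
  have "qf_eval e a m (\<lambda>j. X_pt m c d z (Suc (Suc j))) = qf_eval e a m z"
    by (rule qf_eval_cong) (simp add: X_pt_def)
  then show ?thesis unfolding in_X_iff by (simp add: X_pt_def)
qed

lemma X_pt_eta: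
  assumes "in_X e a m x"
  shows "X_pt m (x 0) (x 1) (\<lambda>j. x (Suc (Suc j))) = x"
proof
  fix i
  have "i = 0 \<or> i = 1 \<or> (i \<ge> 2 \<and> i < m + 2) \<or> i \<ge> m + 2" by linarith
  then show "X_pt m (x 0) (x 1) (\<lambda>j. x (Suc (Suc j))) i = x i"
    using assms unfolding in_X_iff X_pt_def by (auto simp: Suc_diff_Suc numeral_2_eq_2)
qed

lemma poly_X_pt: "poly (X_pt m P Q Y i) s = X_pt m (poly P s) (poly Q s) (\<lambda>j. poly (Y j) s) i"
  by (simp add: X_pt_def)

lemma poly_qf_eval_kts: "poly (qf_eval emb_kts a m Y) s = qf_eval emb_kt a m (\<lambda>i. poly (Y i) s)"
  by (rule qf_eval_hom[symmetric]) (simp_all add: emb_kts_def)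

lemma qf_eval_kts_const: "qf_eval emb_kts a m (\<lambda>j. [:w j:]) = [:qf_eval emb_kt a m w:]"
  by (rule qf_eval_hom) (simp_all add: emb_kts_def)

lemma A1_chain_homotopic_eq_symclp: "A1_chain_homotopic a m = (symclp (A1_homotopic a m))\<^sup>*\<^sup>*"
  unfolding A1_chain_homotopic_def symclp_def ..

lemma equivp_A1_chain_homotopic: "equivp (A1_chain_homotopic a m)"
  by (simp add: A1_chain_homotopic_eq_symclp)

lemmas A1_chain_homotopic_refl = equivp_reflp[OF equivp_A1_chain_homotopic]
lemmas A1_chain_homotopic_sym = equivp_symp[OF equivp_A1_chain_homotopic]
lemmas A1_chain_homotopic_trans [trans] = equivp_transp[OF equivp_A1_chain_homotopic]

lemma A1_chain_homotopic_X_pt_family: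
  assumes "P * Q = 1 - qf_eval emb_kts a m Y"
  shows "A1_chain_homotopic a m (X_pt m (poly P 0) (poly Q 0) (\<lambda>j. poly (Y j) 0))
                                (X_pt m (poly P 1) (poly Q 1) (\<lambda>j. poly (Y j) 1))"
proof -
  have "A1_homotopic a m (X_pt m (poly P 0) (poly Q 0) (\<lambda>j. poly (Y j) 0))
                         (X_pt m (poly P 1) (poly Q 1) (\<lambda>j. poly (Y j) 1))"
    unfolding A1_homotopic_def using assms
    by (intro exI[of _ "X_pt m P Q Y"]) (simp add: in_X_X_pt_iff poly_X_pt)
  then show ?thesis unfolding A1_chain_homotopic_eq_symclp by (intro r_into_rtranclp symclpI1)
qed

lemma A1_chain_homotopic_move_tail_fst:
  fixes x :: "nat \<Rightarrow> 'k::field poly fract"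
  assumes x: "in_X emb_kt a m x" and x0: "x 0 \<noteq> 0"
  shows "A1_chain_homotopic a m x (X_pt m (x 0) ((1 - qf_eval emb_kt a m z) / x 0) z)"
proof -
  define Y where "Y = (\<lambda>j. [:x (Suc (Suc j)), z j - x (Suc (Suc j)):])"
  define Q where "Q = smult (inverse (x 0)) (1 - qf_eval emb_kts a m Y)"
  have "[:x 0:] * Q = 1 - qf_eval emb_kts a m Y"
    using x0 unfolding Q_def by simp
  note family = A1_chain_homotopic_X_pt_family[OF this]
  have "poly Q 0 = x 1"
    using x x0 unfolding in_X_iff Q_def by (simp add: poly_qf_eval_kts Y_def field_simps)
  then have "X_pt m (poly [:x 0:] 0) (poly Q 0) (\<lambda>j. poly (Y j) 0) = x"
    using X_pt_eta[OF x] by (simp add: Y_def)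
  moreover have "X_pt m (poly [:x 0:] 1) (poly Q 1) (\<lambda>j. poly (Y j) 1) =
      X_pt m (x 0) ((1 - qf_eval emb_kt a m z) / x 0) z"
    unfolding Q_def by (simp add: poly_qf_eval_kts Y_def field_simps)
  ultimately show ?thesis using family by simp
qed

lemma A1_chain_homotopic_move_tail_snd:
  fixes x :: "nat \<Rightarrow> 'k::field poly fract"
  assumes x: "in_X emb_kt a m x" and x1: "x 1 \<noteq> 0"
  shows "A1_chain_homotopic a m x (X_pt m ((1 - qf_eval emb_kt a m z) / x 1) (x 1) z)"
proof -
  define Y where "Y = (\<lambda>j. [:x (Suc (Suc j)), z j - x (Suc (Suc j)):])"
  define P where "P = smult (inverse (x 1)) (1 - qf_eval emb_kts a m Y)"
  have "P * [:x 1:] = 1 - qf_eval emb_kts a m Y"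
    using x1 unfolding P_def by simp
  note family = A1_chain_homotopic_X_pt_family[OF this]
  have "poly P 0 = x 0"
    using x x1 unfolding in_X_iff P_def by (simp add: poly_qf_eval_kts Y_def field_simps)
  then have "X_pt m (poly P 0) (poly [:x 1:] 0) (\<lambda>j. poly (Y j) 0) = x"
    using X_pt_eta[OF x] by (simp add: Y_def)
  moreover have "X_pt m (poly P 1) (poly [:x 1:] 1) (\<lambda>j. poly (Y j) 1) =
      X_pt m ((1 - qf_eval emb_kt a m z) / x 1) (x 1) z"
    unfolding P_def by (simp add: poly_qf_eval_kts Y_def field_simps)
  ultimately show ?thesis using family by simp
qed

lemma A1_chain_homotopic_line_fst:
  assumes "qf_eval emb_kt a m w = 1"
  shows "A1_chain_homotopic a m (X_pt m c 0 w) (X_pt m d 0 w)"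
  using A1_chain_homotopic_X_pt_family[of "[:c, d - c:]" 0 a m "\<lambda>j. [:w j:]"] assms
  by (simp add: qf_eval_kts_const)

lemma A1_chain_homotopic_line_snd:
  assumes "qf_eval emb_kt a m w = 1"
  shows "A1_chain_homotopic a m (X_pt m 0 c w) (X_pt m 0 d w)"
  using A1_chain_homotopic_X_pt_family[of 0 "[:c, d - c:]" a m "\<lambda>j. [:w j:]"] assms
  by (simp add: qf_eval_kts_const)

lemma A1_chain_homotopic_base_pt:
  fixes x w :: "nat \<Rightarrow> 'k::field poly fract"
  assumes w: "qf_eval emb_kt a m w = 1" and x: "in_X emb_kt a m x"
  shows "A1_chain_homotopic a m x (X_pt m 0 0 w)"
proof -
  consider "x 0 \<noteq> 0" | "x 0 = 0" "x 1 \<noteq> 0" | "x 0 = 0" "x 1 = 0" by blast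
  then show ?thesis
  proof cases
    case 1
    have "A1_chain_homotopic a m x (X_pt m (x 0) 0 w)"
      using A1_chain_homotopic_move_tail_fst[OF x 1, of w] w by simp
    also have "A1_chain_homotopic a m \<dots> (X_pt m 0 0 w)"
      by (rule A1_chain_homotopic_line_fst[OF w])
    finally show ?thesis .
  next
    case 2
    have "A1_chain_homotopic a m x (X_pt m 0 (x 1) w)"
      using A1_chain_homotopic_move_tail_snd[OF x 2(2), of w] w by simp
    also have "A1_chain_homotopic a m \<dots> (X_pt m 0 0 w)"
      by (rule A1_chain_homotopic_line_snd[OF w])
    finally show ?thesis .
  next
    case 3
    define y where "y = (\<lambda>j. x (Suc (Suc j)))"
    have y: "qf_eval emb_kt a m y = 1" using x 3 unfolding in_X_iff y_def by simp
    have "x = X_pt m 0 0 y" using X_pt_eta[OF x] 3 unfolding y_def by simp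
    then have "A1_chain_homotopic a m x (X_pt m 1 0 y)"
      using A1_chain_homotopic_line_fst[OF y] by simp
    also have "A1_chain_homotopic a m \<dots> (X_pt m 1 0 w)"
      using A1_chain_homotopic_move_tail_fst[of a m "X_pt m 1 0 y" w] y w
      by (simp add: in_X_X_pt_iff)
    also have "A1_chain_homotopic a m \<dots> (X_pt m 0 0 w)"
      by (rule A1_chain_homotopic_line_fst[OF w])
    finally show ?thesis .
  qed
qed

section \<open>Specialisation of rational maps\<close>

lemma rat_value_at_unique:
  assumes "rat_value_at q t c" "rat_value_at q t c'"
  shows "c = c'"
proof -
  obtain p r where pr: "poly r t \<noteq> 0" "q = Fract p r" "c = poly p t / poly r t"
    using assms(1) unfolding rat_value_at_def by blast
  obtain p' r' where pr': "poly r' t \<noteq> 0" "q = Fract p' r'" "c' = poly p' t / poly r' t"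
    using assms(2) unfolding rat_value_at_def by blast
  have "r \<noteq> 0" "r' \<noteq> 0" using pr(1) pr'(1) by auto
  then have "p * r' = p' * r" using pr(2) pr'(2) eq_fract(1) by metis
  then have "poly p t * poly r' t = poly p' t * poly r t" by (metis poly_mult)
  then show ?thesis unfolding pr(3) pr'(3) using pr(1) pr'(1) by (simp add: frac_eq_eq)
qed

lemma rat_value_at_add:
  assumes "rat_value_at q t c" "rat_value_at q' t c'"
  shows "rat_value_at (q + q') t (c + c')"
proof -
  obtain p r where pr: "poly r t \<noteq> 0" "q = Fract p r" "c = poly p t / poly r t"
    using assms(1) unfolding rat_value_at_def by blast
  obtain p' r' where pr': "poly r' t \<noteq> 0" "q' = Fract p' r'" "c' = poly p' t / poly r' t"
    using assms(2) unfolding rat_value_at_def by blast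
  have "r \<noteq> 0" "r' \<noteq> 0" using pr(1) pr'(1) by auto
  then have "q + q' = Fract (p * r' + p' * r) (r * r')" using pr(2) pr'(2) by simp
  moreover have "c + c' = poly (p * r' + p' * r) t / poly (r * r') t"
    unfolding pr(3) pr'(3) using pr(1) pr'(1) by (simp add: add_frac_eq)
  moreover have "poly (r * r') t \<noteq> 0" using pr(1) pr'(1) by simp
  ultimately show ?thesis unfolding rat_value_at_def by blast
qed

lemma rat_value_at_mult:
  assumes "rat_value_at q t c" "rat_value_at q' t c'"
  shows "rat_value_at (q * q') t (c * c')"
proof -
  obtain p r where pr: "poly r t \<noteq> 0" "q = Fract p r" "c = poly p t / poly r t"
    using assms(1) unfolding rat_value_at_def by blast
  obtain p' r' where pr': "poly r' t \<noteq> 0" "q' = Fract p' r'" "c' = poly p' t / poly r' t"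
    using assms(2) unfolding rat_value_at_def by blast
  have "q * q' = Fract (p * p') (r * r')" using pr(2) pr'(2) by simp
  moreover have "c * c' = poly (p * p') t / poly (r * r') t" unfolding pr(3) pr'(3) by simp
  moreover have "poly (r * r') t \<noteq> 0" using pr(1) pr'(1) by simp
  ultimately show ?thesis unfolding rat_value_at_def by blast
qed

lemma rat_value_at_emb_kt: "rat_value_at (emb_kt c) t c"
  unfolding rat_value_at_def emb_kt_def by (intro exI[of _ "[:c:]"] exI[of _ 1]) simp

lemma rat_value_at_uminus:
  assumes "rat_value_at q t c"
  shows "rat_value_at (- q) t (- c)"
proof -
  obtain p r where "poly r t \<noteq> 0" "q = Fract p r" "c = poly p t / poly r t"
    using assms unfolding rat_value_at_def by blast
  then show ?thesis unfolding rat_value_at_def by (intro exI[of _ "- p"] exI[of _ r]) simp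
qed

lemma rat_value_at_diff:
  assumes "rat_value_at q t c" "rat_value_at q' t c'"
  shows "rat_value_at (q - q') t (c - c')"
  using rat_value_at_add[OF assms(1) rat_value_at_uminus[OF assms(2)]] by simp

lemma rat_value_at_qf_eval:
  assumes "\<And>i. i < m \<Longrightarrow> rat_value_at (v i) t (c i)"
  shows "rat_value_at (qf_eval emb_kt a m v) t (qf_eval id a m c)"
proof -
  have sum: "rat_value_at (\<Sum>i<n. g i) t (\<Sum>i<n. d i)"
    if "\<And>i. i < n \<Longrightarrow> rat_value_at (g i) t (d i)" for n :: nat and g d
    using that
    by (induction n) (auto intro: rat_value_at_add simp: rat_value_at_emb_kt[of 0, simplified])
  show ?thesis
    unfolding qf_eval_def by (intro sum rat_value_at_mult) (simp_all add: assms rat_value_at_emb_kt)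
qed

lemma in_X_rat_map_value:
  fixes f :: "nat \<Rightarrow> 'k::field poly fract"
  assumes f: "in_X emb_kt a m f" and y: "rat_map_value_at f t y"
  shows "in_X id a m y"
proof -
  have val: "rat_value_at (f i) t (y i)" for i using y unfolding rat_map_value_at_def by blast
  have eq: "f 0 * f 1 = 1 - qf_eval emb_kt a m (\<lambda>j. f (Suc (Suc j)))" and tail: "\<forall>i\<ge>m+2. f i = 0"
    using f unfolding in_X_iff by auto
  have "rat_value_at (f 0 * f 1) t (y 0 * y 1)" by (rule rat_value_at_mult[OF val val])
  moreover have "rat_value_at (f 0 * f 1) t (1 - qf_eval id a m (\<lambda>j. y (Suc (Suc j))))"
    unfolding eq using rat_value_at_emb_kt[of 1]
    by (intro rat_value_at_diff rat_value_at_qf_eval val) simp_all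
  ultimately have "y 0 * y 1 = 1 - qf_eval id a m (\<lambda>j. y (Suc (Suc j)))"
    by (rule rat_value_at_unique)
  moreover have "y i = 0" if "i \<ge> m + 2" for i
  proof -
    have "rat_value_at (f i) t 0" using tail that rat_value_at_emb_kt[of 0 t] by simp
    then show ?thesis using rat_value_at_unique[OF val] by blast
  qed
  ultimately show ?thesis unfolding in_X_iff by simp
qed

lemma in_X_emb_kt:
  fixes y :: "nat \<Rightarrow> 'k::field"
  assumes "in_X id a m y"
  shows "in_X emb_kt a m (\<lambda>i. emb_kt (y i))"
proof -
  have "qf_eval emb_kt a m (\<lambda>j. emb_kt (y (Suc (Suc j)))) = emb_kt (qf_eval id a m (\<lambda>j. y (Suc (Suc j))))"
    by (rule qf_eval_hom) simp_all
  then show ?thesis using assms unfolding in_X_iff by (simp flip: emb_kt_mult emb_kt_diff emb_kt_1)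
qed

lemma rat_map_value_at_exists:
  fixes f :: "nat \<Rightarrow> 'k::field_char_0 poly fract"
  assumes "\<forall>i\<ge>n. f i = 0"
  shows "\<exists>t y. rat_map_value_at f t y"
proof -
  have "\<forall>i. \<exists>p r. f i = Fract p r \<and> r \<noteq> 0"
    by (metis Fract_cases)
  then obtain p r where pr: "\<And>i. f i = Fract (p i) (r i)" "\<And>i. r i \<noteq> 0"
    by metis
  have "finite {x. poly (\<Prod>i<n. r i) x = 0}"
    using pr(2) by (intro poly_roots_finite) simp
  then obtain t where "poly (\<Prod>i<n. r i) t \<noteq> 0"
    using ex_new_if_finite[OF infinite_UNIV_char_0] by blast
  then have rt: "poly (r i) t \<noteq> 0" if "i < n" for i
    using that by (simp add: poly_prod)
  have "rat_value_at (f i) t (if i < n then poly (p i) t / poly (r i) t else 0)" for i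
    using rt pr(1) assms rat_value_at_emb_kt[of 0] unfolding rat_value_at_def
    by (cases "i < n") auto
  then show ?thesis unfolding rat_map_value_at_def by (intro exI[of _ t] exI) (rule allI)
qed

section \<open>The isotropic case\<close>

lemma qf_represents_one_if_isotropic:
  fixes a :: "nat \<Rightarrow> nat \<Rightarrow> 'k::field_char_0"
  assumes iso: "\<not> anisotropic_phi a m" and reg: "regular_qf a m" and sym: "symmetric_qf a m"
  shows "\<exists>w. qf_eval id a m w = 1"
proof -
  obtain v i where v: "phi_eval id a m v = 0" "i \<le> m" "v i \<noteq> 0"
    using iso unfolding anisotropic_phi_def by blast
  define u where "u = (\<lambda>j. v (Suc j))"
  have vu: "qf_eval id a m u = v 0 * v 0" using v(1) unfolding phi_eval_def u_def by simp
  show ?thesis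
  proof (cases "v 0 = 0")
    case False
    then have "qf_eval id a m (\<lambda>j. inverse (v 0) * u j) = 1"
      unfolding qf_eval_scale vu by (simp add: field_simps)
    then show ?thesis by blast
  next
    case True
    then have u0: "qf_eval id a m u = 0" using vu by simp
    have "i - 1 < m" "u (i - 1) \<noteq> 0" using True v(2,3) unfolding u_def by (cases i; simp)+
    then obtain z where "bilin_eval id a m u z \<noteq> 0"
      using reg unfolding regular_qf_def bilin_eval_def by force
    then have uz: "bilin_eval id a m z u \<noteq> 0" using bilin_eval_commute[OF sym] by metis
    \<comment> \<open>\<open>u\<close> is isotropic, so \<open>phi'(z + l u)\<close> is affine in \<open>l\<close> with slope \<open>2 B(z, u)\<close>\<close>
    define l where "l = (1 - qf_eval id a m z) / (2 * bilin_eval id a m z u)"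
    have "qf_eval id a m (\<lambda>i. z i + l * u i) = 1"
      unfolding qf_eval_add_scaled[OF sym] u0 l_def using uz by (simp add: field_simps)
    then show ?thesis by blast
  qed
qed

lemma cond2_if_isotropic:
  fixes a :: "nat \<Rightarrow> nat \<Rightarrow> 'k::field_char_0"
  assumes iso: "\<not> anisotropic_phi a m" and reg: "regular_qf a m" and sym: "symmetric_qf a m"
    and f: "in_X emb_kt a m f"
  shows "cond2 a m f"
  unfolding cond2_def
proof (intro allI impI)
  fix t y assume y: "rat_map_value_at f t y"
  obtain w where w: "qf_eval id a m w = 1"
    using qf_represents_one_if_isotropic[OF iso reg sym] by blast
  have "qf_eval emb_kt a m (\<lambda>j. emb_kt (w j)) = emb_kt (qf_eval id a m w)"
    by (rule qf_eval_hom) simp_all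
  then have w': "qf_eval emb_kt a m (\<lambda>j. emb_kt (w j)) = 1" using w by simp
  have "A1_chain_homotopic a m f (X_pt m 0 0 (\<lambda>j. emb_kt (w j)))"
    by (rule A1_chain_homotopic_base_pt[OF w' f])
  also have "A1_chain_homotopic a m \<dots> (\<lambda>i. emb_kt (y i))"
    using A1_chain_homotopic_base_pt[OF w' in_X_emb_kt[OF in_X_rat_map_value[OF f y]]]
    by (rule A1_chain_homotopic_sym)
  finally show "A1_chain_homotopic a m f (\<lambda>i. emb_kt (y i))" .
qed

section \<open>The first coordinate modulo <D> is a homotopy invariant\<close>

lemma in_X_kt_fst_nonzero:
  fixes a :: "nat \<Rightarrow> nat \<Rightarrow> 'k::field_char_0"
  assumes "anisotropic_phi a m" "in_X emb_kt a m x"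
  shows "x 0 \<noteq> 0"
  using assms(2) one_minus_qf_kt_nonzero[OF assms(1)] unfolding in_X_iff by force

lemma poly_one_minus_qf_kts_in_D_phi:
  fixes a :: "nat \<Rightarrow> nat \<Rightarrow> 'k::field_char_0"
  assumes "anisotropic_phi a m"
  shows "poly (1 - qf_eval emb_kts a m Y) s \<in> D_phi emb_kt a m"
  by (simp add: poly_qf_eval_kts one_minus_qf_in_D_phi[OF assms])

lemma degree_qf_eval_kts_le:
  assumes "\<And>i. i < m \<Longrightarrow> degree (Y i) \<le> d"
  shows "degree (qf_eval emb_kts a m Y) \<le> 2 * d"
  unfolding qf_eval_def
proof (intro degree_sum_le)
  fix i j assume "i \<in> {..<m}" "j \<in> {..<m}"
  then have "degree (emb_kts (a i j)) + degree (Y i) + degree (Y j) \<le> 2 * d"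
    using assms[of i] assms[of j] by (simp add: emb_kts_def)
  then show "degree (emb_kts (a i j) * Y i * Y j) \<le> 2 * d"
    by (meson degree_mult_le add_le_mono1 order_trans)
qed auto

lemma one_minus_qf_kts_descent:
  fixes a :: "nat \<Rightarrow> nat \<Rightarrow> 'k::field_char_0" and P Q :: "'k poly fract poly"
  assumes an: "anisotropic_phi a m" and sym: "symmetric_qf a m"
    and PQ: "P * Q = 1 - qf_eval emb_kts a m Y" and deg: "degree P \<noteq> 0"
  obtains Q' Y' where "Q' * P = 1 - qf_eval emb_kts a m Y'" "degree Q' < degree P"
proof -
  have P: "P \<noteq> 0" using deg by auto
  define U where "U = (\<lambda>i. Y i div P)"
  define Y' where "Y' = (\<lambda>i. Y i mod P)"
  define Q' where "Q' = Q + 2 * bilin_eval emb_kts a m Y' U + P * qf_eval emb_kts a m U"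
  have "Y = (\<lambda>i. Y' i + P * U i)"
    unfolding Y'_def U_def by (simp add: mod_div_mult_eq mult.commute)
  then have "qf_eval emb_kts a m Y =
      qf_eval emb_kts a m Y' + 2 * P * bilin_eval emb_kts a m Y' U + P * P * qf_eval emb_kts a m U"
    by (simp only: qf_eval_add_scaled[OF sym])
  then have Q'P: "Q' * P = 1 - qf_eval emb_kts a m Y'"
    using PQ unfolding Q'_def by (simp add: algebra_simps)
  have "poly (Q' * P) 0 \<noteq> 0"
    unfolding Q'P using poly_one_minus_qf_kts_in_D_phi[OF an, of Y' 0] D_phi_nonzero by metis
  then have Q': "Q' \<noteq> 0" by auto
  have "degree (Y' i) \<le> degree P - 1" for i
    using degree_mod_less[OF P, of "Y i"] unfolding Y'_def by auto
  then have "degree (qf_eval emb_kts a m Y') \<le> 2 * (degree P - 1)"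
    by (rule degree_qf_eval_kts_le)
  then have "degree (Q' * P) \<le> 2 * (degree P - 1)"
    using Q'P degree_diff_le_max[of 1 "qf_eval emb_kts a m Y'"] by simp
  then have "degree Q' < degree P"
    using deg degree_mult_eq[OF Q' P] by linarith
  with Q'P show ?thesis by (rule that)
qed

lemma poly_fst_ratio_in_gen_subgroup:
  fixes a :: "nat \<Rightarrow> nat \<Rightarrow> 'k::field_char_0" and P Q :: "'k poly fract poly"
  assumes an: "anisotropic_phi a m" and sym: "symmetric_qf a m"
  shows "P * Q = 1 - qf_eval emb_kts a m Y \<Longrightarrow>
    poly P 0 / poly P 1 \<in> gen_subgroup (D_phi emb_kt a m)"
proof (induction "degree P" arbitrary: P Q Y rule: less_induct)
  case less
  have PQ_D: "poly (P * Q) s \<in> gen_subgroup (D_phi emb_kt a m)" for s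
    unfolding less.prems by (rule gen_subgroup_generator[OF poly_one_minus_qf_kts_in_D_phi[OF an]])
  have nonzero: "poly P s \<noteq> 0" for s
    using gen_subgroup_nonzero[OF D_phi_nonzero PQ_D[of s]] by auto
  show ?case
  proof (cases "degree P = 0")
    case True
    then have "poly P 0 = poly P 1" by (metis degree_0_id poly_const_conv)
    then show ?thesis using nonzero[of 0] gen_subgroup.one by simp
  next
    case False
    obtain Q' Y' where Q'P: "Q' * P = 1 - qf_eval emb_kts a m Y'" and deg: "degree Q' < degree P"
      using one_minus_qf_kts_descent[OF an sym less.prems False] by blast
    have IH: "poly Q' 0 / poly Q' 1 \<in> gen_subgroup (D_phi emb_kt a m)"
      by (rule less.hyps[OF deg Q'P])
    have QP_D: "poly (Q' * P) s \<in> gen_subgroup (D_phi emb_kt a m)" for s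
      unfolding Q'P by (rule gen_subgroup_generator[OF poly_one_minus_qf_kts_in_D_phi[OF an]])
    have "poly (Q' * P) 0 / poly (Q' * P) 1 / (poly Q' 0 / poly Q' 1)
        \<in> gen_subgroup (D_phi emb_kt a m)"
      by (rule gen_subgroup_divide[OF gen_subgroup_divide[OF QP_D QP_D] IH])
    moreover have "poly Q' s \<noteq> 0" for s
      using gen_subgroup_nonzero[OF D_phi_nonzero QP_D[of s]] by auto
    ultimately show ?thesis using nonzero[of 1] by simp
  qed
qed

lemma A1_homotopic_fst_ratio:
  fixes a :: "nat \<Rightarrow> nat \<Rightarrow> 'k::field_char_0"
  assumes an: "anisotropic_phi a m" and sym: "symmetric_qf a m" and "A1_homotopic a m x y"
  shows "x 0 / y 0 \<in> gen_subgroup (D_phi emb_kt a m)"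
proof -
  obtain h where h: "in_X emb_kts a m h" "(\<lambda>i. poly (h i) 0) = x" "(\<lambda>i. poly (h i) 1) = y"
    using assms(3) unfolding A1_homotopic_def by blast
  have "h 0 * h 1 = 1 - qf_eval emb_kts a m (\<lambda>j. h (Suc (Suc j)))"
    using h(1) unfolding in_X_iff by simp
  then have "poly (h 0) 0 / poly (h 0) 1 \<in> gen_subgroup (D_phi emb_kt a m)"
    by (rule poly_fst_ratio_in_gen_subgroup[OF an sym])
  then show ?thesis using h(2,3) by auto
qed

lemma A1_chain_homotopic_fst_ratio:
  fixes a :: "nat \<Rightarrow> nat \<Rightarrow> 'k::field_char_0"
  assumes an: "anisotropic_phi a m" and sym: "symmetric_qf a m"
    and xy: "A1_chain_homotopic a m x y" and x0: "x 0 \<noteq> 0"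
  shows "x 0 / y 0 \<in> gen_subgroup (D_phi emb_kt a m)"
  using xy unfolding A1_chain_homotopic_eq_symclp
proof (induction rule: rtranclp_induct)
  case base
  then show ?case using x0 gen_subgroup.one by simp
next
  case (step y z)
  have "y 0 / z 0 \<in> gen_subgroup (D_phi emb_kt a m)"
    using step(2) A1_homotopic_fst_ratio[OF an sym] gen_subgroup_inverse
    by (cases rule: symclpE) fastforce+
  moreover have "x 0 / y 0 * (y 0 / z 0) = x 0 / z 0"
    using gen_subgroup_nonzero[OF D_phi_nonzero step(3)] by simp
  ultimately show ?case using gen_subgroup_mult[OF step(3)] by metis
qed

lemma scaled_gen_subgroup_if_cond2:
  fixes a :: "nat \<Rightarrow> nat \<Rightarrow> 'k::field_char_0"
  assumes an: "anisotropic_phi a m" and sym: "symmetric_qf a m"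
    and f: "in_X emb_kt a m f" and "cond2 a m f"
  shows "\<exists>c. c \<noteq> 0 \<and> f 0 \<in> (\<lambda>g. emb_kt c * g) ` gen_subgroup (D_phi emb_kt a m)"
proof -
  obtain t y where "rat_map_value_at f t y"
    using rat_map_value_at_exists f unfolding in_X_iff by blast
  then have fy: "A1_chain_homotopic a m f (\<lambda>i. emb_kt (y i))"
    using assms(4) unfolding cond2_def by blast
  have g: "f 0 / emb_kt (y 0) \<in> gen_subgroup (D_phi emb_kt a m)"
    using A1_chain_homotopic_fst_ratio[OF an sym fy in_X_kt_fst_nonzero[OF an f]] by simp
  then have "y 0 \<noteq> 0" using gen_subgroup_nonzero[OF D_phi_nonzero] by fastforce
  moreover have "f 0 = emb_kt (y 0) * (f 0 / emb_kt (y 0))" using \<open>y 0 \<noteq> 0\<close> by simp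
  ultimately show ?thesis using g by blast
qed

section \<open>Specialisation of elements of <D>\<close>

definition specializes_in_D :: "(nat \<Rightarrow> nat \<Rightarrow> 'k::field) \<Rightarrow> nat \<Rightarrow> 'k \<Rightarrow> 'k poly \<Rightarrow> bool" where
  "specializes_in_D a m t P \<longleftrightarrow> (\<exists>e P'. P = [:-t, 1:] ^ (2 * e) * P' \<and> poly P' t \<noteq> 0 \<and>
      to_fract P' / emb_kt (poly P' t) \<in> gen_subgroup (D_phi emb_kt a m))"

lemma specializes_in_D_1: "specializes_in_D a m t 1"
  unfolding specializes_in_D_def
  by (intro exI[of _ 0] exI[of _ 1]) (simp add: emb_kt_conv_to_fract gen_subgroup.one flip: one_pCons)

lemma specializes_in_D_mult:
  assumes "specializes_in_D a m t P" "specializes_in_D a m t Q"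
  shows "specializes_in_D a m t (P * Q)"
proof -
  obtain e P' where P: "P = [:-t, 1:] ^ (2 * e) * P'" "poly P' t \<noteq> 0"
    "to_fract P' / emb_kt (poly P' t) \<in> gen_subgroup (D_phi emb_kt a m)"
    using assms(1) unfolding specializes_in_D_def by blast
  obtain f Q' where Q: "Q = [:-t, 1:] ^ (2 * f) * Q'" "poly Q' t \<noteq> 0"
    "to_fract Q' / emb_kt (poly Q' t) \<in> gen_subgroup (D_phi emb_kt a m)"
    using assms(2) unfolding specializes_in_D_def by blast
  have "P * Q = [:-t, 1:] ^ (2 * (e + f)) * (P' * Q')"
    unfolding P(1) Q(1) by (simp add: power_add mult_ac distrib_left)
  moreover have "to_fract (P' * Q') / emb_kt (poly (P' * Q') t) =
      (to_fract P' / emb_kt (poly P' t)) * (to_fract Q' / emb_kt (poly Q' t))"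
    by simp
  ultimately show ?thesis
    unfolding specializes_in_D_def using P(2) Q(2) gen_subgroup_mult[OF P(3) Q(3)]
    by (intro exI[of _ "e + f"] exI[of _ "P' * Q'"]) simp
qed

lemma order_power_mult:
  fixes A :: "'k::field poly"
  assumes "poly A t \<noteq> 0"
  shows "order t ([:-t, 1:] ^ n * A) = n"
proof -
  have "A \<noteq> 0" using assms by auto
  then show ?thesis using assms by (simp add: order_mult order_power_n_n order_0I)
qed

lemma common_linear_power_factor:
  fixes V :: "nat \<Rightarrow> 'k::field poly"
  assumes "\<exists>i\<le>m. V i \<noteq> 0"
  obtains e V' where "\<And>i. i \<le> m \<Longrightarrow> V i = [:-t, 1:] ^ e * V' i" "\<exists>i\<le>m. poly (V' i) t \<noteq> 0"
proof -
  define S where "S = {i. i \<le> m \<and> V i \<noteq> 0}"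
  define e where "e = Min ((\<lambda>i. order t (V i)) ` S)"
  have fin: "finite ((\<lambda>i. order t (V i)) ` S)" unfolding S_def by simp
  obtain i0 where i0: "i0 \<in> S" "order t (V i0) = e"
    using Min_in[OF fin] assms unfolding e_def S_def by fastforce
  define V' where "V' = (\<lambda>i. V i div [:-t, 1:] ^ e)"
  have "e \<le> order t (V i)" if "i \<le> m" "V i \<noteq> 0" for i
    using Min_le[OF fin] that unfolding e_def S_def by auto
  then have "[:-t, 1:] ^ e dvd V i" if "i \<le> m" for i
    unfolding order_divides using that by blast
  then have eq: "V i = [:-t, 1:] ^ e * V' i" if "i \<le> m" for i
    unfolding V'_def using that by simp
  have "V i0 \<noteq> 0" "i0 \<le> m" using i0(1) unfolding S_def by auto
  then have "order t (V i0) = e + order t (V' i0)"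
    using eq[of i0] by (simp add: order_mult order_power_n_n)
  then have "poly (V' i0) t \<noteq> 0"
    using i0(2) \<open>V i0 \<noteq> 0\<close> eq[OF \<open>i0 \<le> m\<close>] by (auto simp: order_root)
  with eq \<open>i0 \<le> m\<close> show ?thesis using that by blast
qed

lemma phi_eval_poly_specializes_in_D:
  fixes a :: "nat \<Rightarrow> nat \<Rightarrow> 'k::field_char_0"
  assumes an: "anisotropic_phi a m" and nz: "phi_eval (\<lambda>c. [:c:]) a m V \<noteq> 0"
  shows "specializes_in_D a m t (phi_eval (\<lambda>c. [:c:]) a m V)"
proof -
  have "\<exists>i\<le>m. V i \<noteq> 0"
  proof (rule ccontr)
    assume "\<not> ?thesis"
    then have "phi_eval (\<lambda>c. [:c:]) a m V = phi_eval (\<lambda>c. [:c:]) a m (\<lambda>i. 0 * V i)"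
      by (intro phi_eval_cong) simp
    then show False using nz unfolding phi_eval_scale by simp
  qed
  then obtain e V' where V': "\<And>i. i \<le> m \<Longrightarrow> V i = [:-t, 1:] ^ e * V' i"
    and V'_t: "\<exists>i\<le>m. poly (V' i) t \<noteq> 0"
    using common_linear_power_factor[where t = t] by blast
  define P' where "P' = phi_eval (\<lambda>c. [:c:]) a m V'"
  have "phi_eval (\<lambda>c. [:c:]) a m V = phi_eval (\<lambda>c. [:c:]) a m (\<lambda>i. [:-t, 1:] ^ e * V' i)"
    by (intro phi_eval_cong V')
  then have factor: "phi_eval (\<lambda>c. [:c:]) a m V = [:-t, 1:] ^ (2 * e) * P'"
    unfolding phi_eval_scale P'_def by (simp add: power_add mult_2)
  have P'_value: "poly P' t = phi_eval id a m (\<lambda>i. poly (V' i) t)"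
    unfolding P'_def by (rule phi_eval_hom[symmetric]) simp_all
  then have P'_t: "poly P' t \<noteq> 0"
    using an V'_t unfolding anisotropic_phi_def by (metis (no_types, lifting))
  have "to_fract P' = phi_eval emb_kt a m (\<lambda>i. to_fract (V' i))"
    unfolding P'_def by (rule phi_eval_hom[symmetric]) (simp_all add: emb_kt_conv_to_fract)
  then have "to_fract P' \<in> D_phi emb_kt a m" unfolding D_phi_def using P'_t by auto
  moreover have "emb_kt (poly P' t) = phi_eval emb_kt a m (\<lambda>i. emb_kt (poly (V' i) t))"
    unfolding P'_value by (rule phi_eval_hom[symmetric]) simp_all
  then have "emb_kt (poly P' t) \<in> D_phi emb_kt a m" unfolding D_phi_def using P'_t by auto
  ultimately show ?thesis
    unfolding specializes_in_D_def using factor P'_t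
    by (blast intro: gen_subgroup_divide gen_subgroup_generator)
qed

lemma D_phi_specializes_ratio:
  fixes a :: "nat \<Rightarrow> nat \<Rightarrow> 'k::field_char_0"
  assumes an: "anisotropic_phi a m" and d: "d \<in> D_phi emb_kt a m"
  obtains A B where "specializes_in_D a m t A" "specializes_in_D a m t B" "d * to_fract B = to_fract A"
proof -
  obtain v where d0: "d \<noteq> 0" and dv: "d = phi_eval emb_kt a m v" using d unfolding D_phi_def by blast
  obtain R V where RV: "R \<noteq> 0" "\<forall>i\<le>m. to_fract R * v i = to_fract (V i)"
    using fract_common_denominator by blast
  have "to_fract R * to_fract R * d = phi_eval emb_kt a m (\<lambda>i. to_fract R * v i)"
    unfolding phi_eval_scale dv ..
  also have "\<dots> = phi_eval emb_kt a m (\<lambda>i. to_fract (V i))"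
    by (rule phi_eval_cong) (simp add: RV)
  also have "\<dots> = to_fract (phi_eval (\<lambda>c. [:c:]) a m V)"
    by (rule phi_eval_hom) (simp_all add: emb_kt_conv_to_fract)
  finally have eq: "d * to_fract (R * R) = to_fract (phi_eval (\<lambda>c. [:c:]) a m V)"
    by (simp add: mult_ac)
  then have "phi_eval (\<lambda>c. [:c:]) a m V \<noteq> 0" using d0 RV(1) by (metis mult_eq_0_iff to_fract_eq_0_iff)
  moreover have "R * R = phi_eval (\<lambda>c. [:c:]) a m (\<lambda>i. if i = 0 then R else 0)"
    unfolding phi_eval_def by simp
  ultimately show ?thesis
    using that phi_eval_poly_specializes_in_D[OF an] RV(1) eq by (metis mult_eq_0_iff)
qed

lemma gen_subgroup_D_specializes_ratio:
  fixes a :: "nat \<Rightarrow> nat \<Rightarrow> 'k::field_char_0"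
  assumes an: "anisotropic_phi a m" and "g \<in> gen_subgroup (D_phi emb_kt a m)"
  shows "\<exists>A B. specializes_in_D a m t A \<and> specializes_in_D a m t B \<and> g * to_fract B = to_fract A"
  using assms(2)
proof (induction rule: gen_subgroup.induct)
  case one
  then show ?case using specializes_in_D_1 by (metis mult_1 to_fract_1)
next
  case (mult x d)
  obtain A B where AB: "specializes_in_D a m t A" "specializes_in_D a m t B" "x * to_fract B = to_fract A"
    using mult.IH by blast
  obtain A' B' where A'B': "specializes_in_D a m t A'" "specializes_in_D a m t B'" "d * to_fract B' = to_fract A'"
    using D_phi_specializes_ratio[OF an mult.hyps(2)] by blast
  have "x * d * to_fract (B * B') = to_fract (A * A')"
    by (simp flip: AB(3) A'B'(3) add: mult_ac)
  then show ?case using specializes_in_D_mult AB A'B' by blast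
next
  case (mult_inv x d)
  obtain A B where AB: "specializes_in_D a m t A" "specializes_in_D a m t B" "x * to_fract B = to_fract A"
    using mult_inv.IH by blast
  obtain A' B' where A'B': "specializes_in_D a m t A'" "specializes_in_D a m t B'" "d * to_fract B' = to_fract A'"
    using D_phi_specializes_ratio[OF an mult_inv.hyps(2)] by blast
  have "d \<noteq> 0" using mult_inv.hyps(2) D_phi_nonzero by blast
  then have "x * inverse d * to_fract (B * A') = to_fract (A * B')"
    by (simp flip: AB(3) A'B'(3) add: mult_ac)
  then show ?case using specializes_in_D_mult AB A'B' by blast
qed

lemma gen_subgroup_D_div_value:
  fixes a :: "nat \<Rightarrow> nat \<Rightarrow> 'k::field_char_0"
  assumes an: "anisotropic_phi a m" and g: "g \<in> gen_subgroup (D_phi emb_kt a m)"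
    and val: "rat_value_at g t v" and v: "v \<noteq> 0"
  shows "g / emb_kt v \<in> gen_subgroup (D_phi emb_kt a m)"
proof -
  obtain p r where pr: "poly r t \<noteq> 0" "g = Fract p r" "v = poly p t / poly r t"
    using val unfolding rat_value_at_def by blast
  have r: "r \<noteq> 0" and p_t: "poly p t \<noteq> 0" using pr v by auto
  obtain A B where AB: "specializes_in_D a m t A" "specializes_in_D a m t B" "g * to_fract B = to_fract A"
    using gen_subgroup_D_specializes_ratio[OF an g] by blast
  obtain e1 Q1 where Q1: "A = [:-t, 1:] ^ (2 * e1) * Q1" "poly Q1 t \<noteq> 0"
    "to_fract Q1 / emb_kt (poly Q1 t) \<in> gen_subgroup (D_phi emb_kt a m)"
    using AB(1) unfolding specializes_in_D_def by blast
  obtain e2 Q2 where Q2: "B = [:-t, 1:] ^ (2 * e2) * Q2" "poly Q2 t \<noteq> 0"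
    "to_fract Q2 / emb_kt (poly Q2 t) \<in> gen_subgroup (D_phi emb_kt a m)"
    using AB(2) unfolding specializes_in_D_def by blast
  have "to_fract (p * B) = to_fract (r * A)"
    using AB(3) r unfolding pr(2) Fract_conv_to_fract by (simp add: field_simps)
  then have "[:-t, 1:] ^ (2 * e2) * (p * Q2) = [:-t, 1:] ^ (2 * e1) * (r * Q1)"
    unfolding Q1(1) Q2(1) to_fract_eq_iff by (simp add: mult_ac)
  moreover from this have "2 * e2 = 2 * e1"
    using order_power_mult[of "p * Q2" t "2 * e2"] order_power_mult[of "r * Q1" t "2 * e1"]
      p_t pr(1) Q1(2) Q2(2) by simp
  ultimately have pQ2: "p * Q2 = r * Q1" by simp
  then have "poly p t * poly Q2 t = poly r t * poly Q1 t" by (metis poly_mult)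
  then have "emb_kt v * emb_kt (poly Q2 t) = emb_kt (poly Q1 t)"
    unfolding pr(3) using pr(1) by (simp flip: emb_kt_mult add: field_simps)
  then have v_eq: "emb_kt v = emb_kt (poly Q1 t) / emb_kt (poly Q2 t)"
    using Q2(2) by (simp add: field_simps)
  have "Q2 \<noteq> 0" using Q2(2) by auto
  then have g_eq: "g = to_fract Q1 / to_fract Q2"
    using pQ2 r unfolding pr(2) Fract_conv_to_fract by (simp add: field_simps flip: to_fract_mult)
  have "g / emb_kt v = (to_fract Q1 / emb_kt (poly Q1 t)) / (to_fract Q2 / emb_kt (poly Q2 t))"
    unfolding g_eq v_eq using Q1(2) Q2(2) by (simp add: field_simps)
  then show ?thesis using gen_subgroup_divide[OF Q1(3) Q2(3)] by simp
qed

section \<open>Multipliers of the points (c, 1/c, 0)\<close>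

definition unit_pt :: "nat \<Rightarrow> 'a::field \<Rightarrow> nat \<Rightarrow> 'a" where
  "unit_pt m c = X_pt m c (inverse c) (\<lambda>j. 0)"

lemma A1_chain_homotopic_unit_pt:
  fixes x :: "nat \<Rightarrow> 'k::field poly fract"
  assumes "in_X emb_kt a m x" "x 0 \<noteq> 0"
  shows "A1_chain_homotopic a m x (unit_pt m (x 0))"
  using A1_chain_homotopic_move_tail_fst[OF assms, of "\<lambda>j. 0"]
  by (simp add: unit_pt_def divide_inverse)

lemma unit_pt_homotopic_divide:
  fixes b :: "'k::field poly fract"
  assumes b: "b \<noteq> 0" and e: "1 - qf_eval emb_kt a m w \<noteq> 0"
  shows "A1_chain_homotopic a m (unit_pt m b) (unit_pt m (b / (1 - qf_eval emb_kt a m w)))"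
proof -
  define e where "e = 1 - qf_eval emb_kt a m w"
  have "A1_chain_homotopic a m (unit_pt m b) (X_pt m b (e / b) w)"
    using A1_chain_homotopic_move_tail_fst[of a m "unit_pt m b" w] b
    by (simp add: unit_pt_def in_X_X_pt_iff e_def)
  also have "A1_chain_homotopic a m \<dots> (X_pt m (b / e) (e / b) (\<lambda>j. 0))"
    using A1_chain_homotopic_move_tail_snd[of a m "X_pt m b (e / b) w" "\<lambda>j. 0"] b e
    by (simp add: in_X_X_pt_iff e_def)
  also have "X_pt m (b / e) (e / b) (\<lambda>j. 0) = unit_pt m (b / e)"
    by (simp add: unit_pt_def)
  finally show ?thesis unfolding e_def .
qed

definition homotopy_multipliers :: "(nat \<Rightarrow> nat \<Rightarrow> 'k::field) \<Rightarrow> nat \<Rightarrow> 'k poly fract set" where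
  "homotopy_multipliers a m =
     {r. r \<noteq> 0 \<and> (\<forall>c. c \<noteq> 0 \<longrightarrow> A1_chain_homotopic a m (unit_pt m c) (unit_pt m (c * r)))}"

lemma homotopy_multipliers_1: "1 \<in> homotopy_multipliers a m"
  unfolding homotopy_multipliers_def by (simp add: A1_chain_homotopic_refl)

lemma homotopy_multipliers_mult:
  fixes a :: "nat \<Rightarrow> nat \<Rightarrow> 'k::field"
  assumes r: "r \<in> homotopy_multipliers a m" and s: "s \<in> homotopy_multipliers a m"
  shows "r * s \<in> homotopy_multipliers a m"
  unfolding homotopy_multipliers_def
proof (intro CollectI conjI allI impI)
  show "r * s \<noteq> 0" using r s unfolding homotopy_multipliers_def by simp
  fix c :: "'k poly fract" assume c: "c \<noteq> 0"
  have "A1_chain_homotopic a m (unit_pt m c) (unit_pt m (c * r))"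
    using r c unfolding homotopy_multipliers_def by blast
  also have "A1_chain_homotopic a m \<dots> (unit_pt m (c * r * s))"
    using r s c unfolding homotopy_multipliers_def by simp
  finally show "A1_chain_homotopic a m (unit_pt m c) (unit_pt m (c * (r * s)))"
    by (simp add: mult.assoc)
qed

lemma homotopy_multipliers_inverse:
  fixes a :: "nat \<Rightarrow> nat \<Rightarrow> 'k::field"
  assumes r: "r \<in> homotopy_multipliers a m"
  shows "inverse r \<in> homotopy_multipliers a m"
  unfolding homotopy_multipliers_def
proof (intro CollectI conjI allI impI)
  show "inverse r \<noteq> 0" using r unfolding homotopy_multipliers_def by simp
  fix c :: "'k poly fract" assume c: "c \<noteq> 0"
  have r0: "r \<noteq> 0" using r unfolding homotopy_multipliers_def by simp
  have "A1_chain_homotopic a m (unit_pt m (c * inverse r)) (unit_pt m (c * inverse r * r))"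
    using r c r0 unfolding homotopy_multipliers_def by simp
  moreover have "c * inverse r * r = c" using r0 by simp
  ultimately show "A1_chain_homotopic a m (unit_pt m c) (unit_pt m (c * inverse r))"
    by (metis A1_chain_homotopic_sym)
qed

lemma homotopy_multipliers_divide:
  "r \<in> homotopy_multipliers a m \<Longrightarrow> s \<in> homotopy_multipliers a m \<Longrightarrow> r / s \<in> homotopy_multipliers a m"
  by (simp add: divide_inverse homotopy_multipliers_mult homotopy_multipliers_inverse)

lemma one_minus_qf_in_homotopy_multipliers:
  assumes "1 - qf_eval emb_kt a m w \<noteq> 0"
  shows "1 - qf_eval emb_kt a m w \<in> homotopy_multipliers a m"
proof -
  have "inverse (1 - qf_eval emb_kt a m w) \<in> homotopy_multipliers a m"
    unfolding homotopy_multipliers_def using unit_pt_homotopic_divide[OF _ assms] assms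
    by (simp add: divide_inverse)
  then show ?thesis using homotopy_multipliers_inverse by fastforce
qed

lemma square_in_homotopy_multipliers:
  fixes a :: "nat \<Rightarrow> nat \<Rightarrow> 'k::field_char_0"
  assumes an: "anisotropic_phi a m" and m: "m \<ge> 1" and x: "x \<noteq> 0"
  shows "x * x \<in> homotopy_multipliers a m"
proof -
  define e1 :: "nat \<Rightarrow> 'k poly fract" where "e1 = (\<lambda>j. if j = 0 then 1 else 0)"
  define b where "b = qf_eval emb_kt a m e1"
  have b: "b \<noteq> 0" unfolding b_def using m by (intro qf_kt_nonzero[OF an, of 0]) (simp_all add: e1_def)
  define E where "E = (\<lambda>l. 1 - l * l * b)"
  have E_eq: "E l = 1 - qf_eval emb_kt a m (\<lambda>j. l * e1 j)" for l
    unfolding E_def b_def qf_eval_scale ..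
  have E_mult: "E l \<in> homotopy_multipliers a m" and E_nz: "E l \<noteq> 0" for l
    unfolding E_eq using one_minus_qf_in_homotopy_multipliers one_minus_qf_kt_nonzero[OF an] by blast+
  define mu where "mu = (x - 1) / b"
  define nu where "nu = (1 + mu) / x"
  have x_eq: "x = mu * b + 1" unfolding mu_def using b by simp
  have "E 1 * E mu = 1 - b - mu * mu * b + (mu * b) * (mu * b)"
    unfolding E_def by (simp add: algebra_simps)
  also have "\<dots> = x * x - (1 + mu) * (1 + mu) * b"
    unfolding x_eq by (simp add: algebra_simps)
  also have "\<dots> = x * x * E nu"
    unfolding E_def nu_def using x by (simp add: field_simps)
  finally have "E 1 * E mu = x * x * E nu" .
  then have "x * x = E 1 * E mu / E nu" using E_nz[of nu] by (simp add: field_simps)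
  then show ?thesis using E_mult homotopy_multipliers_mult homotopy_multipliers_divide by metis
qed

lemma neg_qf_in_homotopy_multipliers:
  fixes a :: "nat \<Rightarrow> nat \<Rightarrow> 'k::field_char_0"
  assumes an: "anisotropic_phi a m" and b: "qf_eval emb_kt a m w \<noteq> 0"
  shows "- qf_eval emb_kt a m w \<in> homotopy_multipliers a m"
proof -
  define b where "b = qf_eval emb_kt a m w"
  have b0: "b \<noteq> 0" using b unfolding b_def .
  have b': "qf_eval emb_kt a m (\<lambda>j. inverse b * w j) = inverse b"
    unfolding qf_eval_scale b_def[symmetric] using b0 by (simp add: field_simps)
  have "1 - b \<in> homotopy_multipliers a m" "1 - inverse b \<in> homotopy_multipliers a m"
    using one_minus_qf_in_homotopy_multipliers one_minus_qf_kt_nonzero[OF an] b'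
    unfolding b_def by metis+
  moreover have "1 - inverse b \<noteq> 0"
    using one_minus_qf_kt_nonzero[OF an, of "\<lambda>j. inverse b * w j"] unfolding b' .
  then have "- b = (1 - b) / (1 - inverse b)"
    using b0 by (simp add: field_simps)
  ultimately show ?thesis unfolding b_def by (metis homotopy_multipliers_divide)
qed

lemma D_phi_subset_homotopy_multipliers:
  fixes a :: "nat \<Rightarrow> nat \<Rightarrow> 'k::field_char_0"
  assumes an: "anisotropic_phi a m" and m: "m \<ge> 1"
  shows "D_phi emb_kt a m \<subseteq> homotopy_multipliers a m"
proof
  fix d assume "d \<in> D_phi emb_kt a m"
  then obtain v where d: "d \<noteq> 0" "d = v 0 * v 0 - qf_eval emb_kt a m (\<lambda>i. v (Suc i))"
    unfolding D_phi_def phi_eval_def by blast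
  define w where "w = (\<lambda>i. v (Suc i))"
  show "d \<in> homotopy_multipliers a m"
  proof (cases "v 0 = 0")
    case True
    then show ?thesis
      using d neg_qf_in_homotopy_multipliers[OF an, of w] unfolding w_def by simp
  next
    case False
    have "qf_eval emb_kt a m (\<lambda>j. inverse (v 0) * w j) =
        inverse (v 0) * inverse (v 0) * qf_eval emb_kt a m w"
      by (rule qf_eval_scale)
    then have "d = (v 0 * v 0) * (1 - qf_eval emb_kt a m (\<lambda>j. inverse (v 0) * w j))"
      using d False unfolding w_def by (simp add: field_simps)
    then show ?thesis
      using homotopy_multipliers_mult[OF square_in_homotopy_multipliers[OF an m False]
          one_minus_qf_in_homotopy_multipliers[OF one_minus_qf_kt_nonzero[OF an]]]
      by simp
  qed
qed

lemma gen_subgroup_D_subset_homotopy_multipliers: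
  fixes a :: "nat \<Rightarrow> nat \<Rightarrow> 'k::field_char_0"
  assumes "anisotropic_phi a m" "m \<ge> 1"
  shows "gen_subgroup (D_phi emb_kt a m) \<subseteq> homotopy_multipliers a m"
  by (intro gen_subgroup_least homotopy_multipliers_1 homotopy_multipliers_mult
      homotopy_multipliers_inverse D_phi_subset_homotopy_multipliers[OF assms])

lemma cond2_if_scaled_gen_subgroup:
  fixes a :: "nat \<Rightarrow> nat \<Rightarrow> 'k::field_char_0"
  assumes an: "anisotropic_phi a m" and m: "m \<ge> 1" and f: "in_X emb_kt a m f"
    and c: "c \<noteq> 0" and g: "g \<in> gen_subgroup (D_phi emb_kt a m)" and f0: "f 0 = emb_kt c * g"
  shows "cond2 a m f"
  unfolding cond2_def
proof (intro allI impI)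
  fix t y assume y: "rat_map_value_at f t y"
  have fy: "in_X emb_kt a m (\<lambda>i. emb_kt (y i))"
    by (rule in_X_emb_kt[OF in_X_rat_map_value[OF f y]])
  then have y0: "y 0 \<noteq> 0" using in_X_kt_fst_nonzero[OF an] by fastforce
  have f_0: "f 0 \<noteq> 0" by (rule in_X_kt_fst_nonzero[OF an f])
  have "rat_value_at (emb_kt (inverse c) * f 0) t (inverse c * y 0)"
    using y unfolding rat_map_value_at_def by (intro rat_value_at_mult rat_value_at_emb_kt) blast
  moreover have "emb_kt (inverse c) * f 0 = g"
    unfolding f0 using c by (simp add: mult.assoc flip: emb_kt_mult)
  ultimately have "g / emb_kt (inverse c * y 0) \<in> gen_subgroup (D_phi emb_kt a m)"
    using gen_subgroup_D_div_value[OF an g] c y0 by (simp del: emb_kt_mult)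
  then have "g / emb_kt (inverse c * y 0) \<in> homotopy_multipliers a m"
    using gen_subgroup_D_subset_homotopy_multipliers[OF an m] by blast
  moreover have "inverse (g / emb_kt (inverse c * y 0)) = emb_kt (y 0) / f 0"
    unfolding f0 using c by (simp add: field_simps flip: emb_kt_mult)
  ultimately have "emb_kt (y 0) / f 0 \<in> homotopy_multipliers a m"
    using homotopy_multipliers_inverse by metis
  then have "A1_chain_homotopic a m (unit_pt m (f 0)) (unit_pt m (emb_kt (y 0)))"
    using f_0 unfolding homotopy_multipliers_def by auto
  then have "A1_chain_homotopic a m f (unit_pt m (emb_kt (y 0)))"
    using A1_chain_homotopic_trans A1_chain_homotopic_unit_pt[OF f f_0] by blast
  also have "A1_chain_homotopic a m \<dots> (\<lambda>i. emb_kt (y i))"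
    using A1_chain_homotopic_unit_pt[OF fy] y0 by (simp add: A1_chain_homotopic_sym)
  finally show "A1_chain_homotopic a m f (\<lambda>i. emb_kt (y i))" .
qed

theorem corollary4p6:
  fixes a :: "nat \<Rightarrow> nat \<Rightarrow> 'k::field_char_0" and m :: nat
    and f :: "nat \<Rightarrow> 'k poly fract"
  assumes "m \<ge> 1"
    and "symmetric_qf a m"
    and "regular_qf a m"
    and "in_X emb_kt a m f"
  shows "(anisotropic_phi a m \<longrightarrow>
           ((\<exists>c::'k. c \<noteq> 0 \<and> f 0 \<in> (\<lambda>g. emb_kt c * g) ` gen_subgroup (D_phi emb_kt a m))
            \<longleftrightarrow> cond2 a m f))
       \<and> (\<not> anisotropic_phi a m \<longrightarrow> cond2 a m f)"
  using cond2_if_scaled_gen_subgroup[OF _ assms(1,4)] scaled_gen_subgroup_if_cond2[OF _ assms(2,4)]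
    cond2_if_isotropic[OF _ assms(3,2,4)]
  by blast

end
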